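(* If $\sigma'$ is not lower bounded, the optimal policy cannot be identified from the transitions and the comparison probabilities; in particular, for the link function $\sigma(x)=\tfrac12(1+\mathrm{sign}(x))$ there exist an episodic MDP (with horizon $H=2$, known transitions) and two reward functions $r^{(1)},r^{(2)}$ such that $\sigma(r^{(1)}(\tau)-r^{(1)}(\tau'))=\sigma(r^{(2)}(\tau)-r^{(2)}(\tau'))$ for all pairs of trajectories $\tau,\tau'$, while the optimal policies with respect to $r^{(1)}$ and $r^{(2)}$ differ (each is suboptimal for the other reward).
   Context: Episodic MDP with trajectories $\tau$; a comparison oracle with link function $\sigma$ and reward $r$ returns $\tau\succ\tau'$ with probability $\sigma(r(\tau)-r(\tau'))$. A policy is optimal for $r$ if it maximizes $\mathbb{E}_{\tau\sim\pi}[r(\tau)]$. *)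

theory Defs
  imports "HOL-Probability.Probability"
begin

text \<open>Episodic MDP with states and actions encoded as natural numbers, restricted to
finite carriers S (states) and A (actions). A trajectory of horizon H is the list
[(s_0,a_0),...,(s_{H-1},a_{H-1})]. Policies are history-dependent and randomized:
pol hist s is the action distribution given the history so far and current state.
Transitions P h s a may depend on the step h.\<close>

type_synonym traj = "(nat \<times> nat) list"
type_synonym kernel = "nat \<Rightarrow> nat \<Rightarrow> nat \<Rightarrow> nat pmf"
type_synonym policy = "traj \<Rightarrow> nat \<Rightarrow> nat pmf"

definition valid_mdp :: "nat set \<Rightarrow> nat set \<Rightarrow> nat pmf \<Rightarrow> kernel \<Rightarrow> bool" where
  "valid_mdp S A mu0 P \<longleftrightarrow> finite S \<and> S \<noteq> {} \<and> finite A \<and> A \<noteq> {} \<and>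
     set_pmf mu0 \<subseteq> S \<and> (\<forall>h s a. s \<in> S \<longrightarrow> a \<in> A \<longrightarrow> set_pmf (P h s a) \<subseteq> S)"

definition valid_policy :: "nat set \<Rightarrow> nat set \<Rightarrow> policy \<Rightarrow> bool" where
  "valid_policy S A pol \<longleftrightarrow> (\<forall>hist s. s \<in> S \<longrightarrow> set_pmf (pol hist s) \<subseteq> A)"

fun run :: "kernel \<Rightarrow> policy \<Rightarrow> traj \<Rightarrow> nat \<Rightarrow> nat \<Rightarrow> traj pmf" where
  "run P pol hist 0 s = return_pmf hist"
| "run P pol hist (Suc k) s =
     bind_pmf (pol hist s) (\<lambda>a. bind_pmf (P (length hist) s a)
       (\<lambda>s'. run P pol (hist @ [(s, a)]) k s'))"

definition traj_dist :: "nat pmf \<Rightarrow> kernel \<Rightarrow> policy \<Rightarrow> nat \<Rightarrow> traj pmf" where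
  "traj_dist mu0 P pol H = bind_pmf mu0 (\<lambda>s. run P pol [] H s)"

definition policy_value :: "nat pmf \<Rightarrow> kernel \<Rightarrow> nat \<Rightarrow> (traj \<Rightarrow> real) \<Rightarrow> policy \<Rightarrow> real" where
  "policy_value mu0 P H r pol = measure_pmf.expectation (traj_dist mu0 P pol H) r"

definition optimal_policy ::
  "nat set \<Rightarrow> nat set \<Rightarrow> nat pmf \<Rightarrow> kernel \<Rightarrow> nat \<Rightarrow> (traj \<Rightarrow> real) \<Rightarrow> policy \<Rightarrow> bool" where
  "optimal_policy S A mu0 P H r pol \<longleftrightarrow> valid_policy S A pol \<and>
     (\<forall>pol'. valid_policy S A pol' \<longrightarrow> policy_value mu0 P H r pol' \<le> policy_value mu0 P H r pol)"

definition is_traj :: "nat set \<Rightarrow> nat set \<Rightarrow> nat \<Rightarrow> traj \<Rightarrow> bool" where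
  "is_traj S A H tau \<longleftrightarrow> length tau = H \<and> (\<forall>(s, a) \<in> set tau. s \<in> S \<and> a \<in> A)"

definition sign_link :: "real \<Rightarrow> real" where
  "sign_link x = (1 + sgn x) / 2"

end

theory Submission
  imports Defs
begin

(* Under sign_link a comparison reveals only the order of the two rewards. From state 0, action 0
   leads surely to state 1 and action 1 to state 0 or 2 with probability 1/2 each; rewarding the
   second state with 0, c, 3 respectively gives the same comparisons for every 0 < c < 3. The value
   is affine in the probability of action 1, so the gamble is optimal exactly when c < 3/2 and the
   safe action exactly when c > 3/2: c = 1 and c = 2 have disjoint sets of optimal policies. *)

definition coin_kernel :: kernel where
  "coin_kernel h s a = (if a = 1 then pmf_of_set {0, 2} else return_pmf 1)"

definition three_level :: "real \<Rightarrow> real \<Rightarrow> real \<Rightarrow> nat \<Rightarrow> real" where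
  "three_level c0 c1 c2 s = (if s = 0 then c0 else if s = 1 then c1 else c2)"

lemma valid_policy_const:
  "a \<in> A \<Longrightarrow> valid_policy S A (\<lambda>_ _. return_pmf a)"
  by (simp add: valid_policy_def)

lemma sign_link_three_level_eq:
  assumes "c0 < c1" "c1 < c2" "c0 < c1'" "c1' < c2"
  shows "sign_link (three_level c0 c1 c2 x - three_level c0 c1 c2 y) =
    sign_link (three_level c0 c1' c2 x - three_level c0 c1' c2 y)"
  using assms by (auto simp: three_level_def sign_link_def)

lemma policy_value_second_state:
  "policy_value mu0 P 2 (\<lambda>t. f (fst (t ! 1))) pol =
     measure_pmf.expectation (bind_pmf mu0 (\<lambda>s. bind_pmf (pol [] s) (P 0 s))) f"
proof -
  have "policy_value mu0 P 2 (\<lambda>t. f (fst (t ! 1))) pol =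
      measure_pmf.expectation (map_pmf (\<lambda>t. fst (t ! 1)) (traj_dist mu0 P pol 2)) f"
    by (simp add: policy_value_def)
  also have "map_pmf (\<lambda>t. fst (t ! 1)) (traj_dist mu0 P pol 2) =
      bind_pmf mu0 (\<lambda>s. bind_pmf (pol [] s) (P 0 s))"
    by (simp add: traj_dist_def numeral_2_eq_2 map_bind_pmf bind_return_pmf
        map_pmf_def[symmetric] bind_assoc_pmf)
  finally show ?thesis .
qed

lemma expectation_bind_coin_kernel:
  assumes "set_pmf Q \<subseteq> {0, 1}"
  shows "measure_pmf.expectation (bind_pmf Q (coin_kernel h s)) f =
     f 1 + pmf Q 1 * ((f 0 + f 2) / 2 - f 1)"
proof -
  have "measure_pmf.expectation (bind_pmf Q (coin_kernel h s)) f =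
      (\<Sum>a\<in>{0, 1}. pmf Q a * measure_pmf.expectation (coin_kernel h s a) f)"
    using pmf_expectation_bind[of "{0, 1}" "coin_kernel h s" Q f] assms
    by (simp add: coin_kernel_def)
  also have "\<dots> = pmf Q 0 * f 1 + pmf Q 1 * ((f 0 + f 2) / 2)"
    by (simp add: coin_kernel_def integral_pmf_of_set)
  also have "pmf Q 0 = 1 - pmf Q 1"
    using sum_pmf_eq_1[OF _ assms] by simp
  finally show ?thesis by (simp add: algebra_simps)
qed

lemma policy_value_coin_kernel:
  assumes "valid_policy {0, 1, 2} {0, 1} pol"
  shows "policy_value (return_pmf 0) coin_kernel 2 (\<lambda>t. f (fst (t ! 1))) pol =
    f 1 + pmf (pol [] 0) 1 * ((f 0 + f 2) / 2 - f 1)"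
proof -
  have "set_pmf (pol [] 0) \<subseteq> {0, 1}"
    using assms by (simp add: valid_policy_def)
  then show ?thesis
    unfolding policy_value_second_state bind_return_pmf by (rule expectation_bind_coin_kernel)
qed

lemma optimal_policy_coin_kernel_iff:
  "optimal_policy {0, 1, 2} {0, 1} (return_pmf 0) coin_kernel 2 (\<lambda>t. f (fst (t ! 1))) pol \<longleftrightarrow>
    valid_policy {0, 1, 2} {0, 1} pol \<and>
    max 0 ((f 0 + f 2) / 2 - f 1) \<le> pmf (pol [] 0) 1 * ((f 0 + f 2) / 2 - f 1)"
  (is "?opt pol \<longleftrightarrow> _ \<and> max 0 ?d \<le> ?p pol * ?d")
proof -
  let ?valid = "valid_policy {0, 1, 2} {0, 1}"
  let ?V = "policy_value (return_pmf 0) coin_kernel 2 (\<lambda>t. f (fst (t ! 1)))"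
  have value_affine: "?V pol' = f 1 + ?p pol' * ?d" if "?valid pol'" for pol'
    using that by (rule policy_value_coin_kernel)
  have const: "?valid (\<lambda>_ _. return_pmf a)" if "a \<in> {0, 1}" for a
    using that by (rule valid_policy_const)
  have below_max: "?p pol' * ?d \<le> max 0 ?d" for pol'
  proof -
    have "0 \<le> ?p pol'" "?p pol' \<le> 1"
      by (simp_all add: pmf_le_1)
    then show ?thesis
      by (cases "?d \<ge> 0") (simp_all add: mult_left_le_one_le mult_nonneg_nonpos)
  qed
  show ?thesis
  proof
    assume opt: "?opt pol"
    then have valid: "?valid pol"
      by (simp add: optimal_policy_def)
    have le: "?V (\<lambda>_ _. return_pmf a) \<le> ?V pol" if "a \<in> {0, 1}" for a
      using opt const[OF that] by (simp add: optimal_policy_def)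
    have V0: "?V (\<lambda>_ _. return_pmf 0) = f 1" and V1: "?V (\<lambda>_ _. return_pmf 1) = f 1 + ?d"
      using value_affine[OF const, of 0] value_affine[OF const, of 1] by simp_all
    have "f 1 \<le> f 1 + ?p pol * ?d" "f 1 + ?d \<le> f 1 + ?p pol * ?d"
      using le[of 0] le[of 1] unfolding V0 V1 value_affine[OF valid] by simp_all
    with valid show "?valid pol \<and> max 0 ?d \<le> ?p pol * ?d"
      by (simp only: le_add_same_cancel1 add_le_cancel_left max.bounded_iff simp_thms)
  next
    assume "?valid pol \<and> max 0 ?d \<le> ?p pol * ?d"
    then have valid: "?valid pol" and max_le: "max 0 ?d \<le> ?p pol * ?d"
      by simp_all
    have "?V pol' \<le> ?V pol" if "?valid pol'" for pol'
      unfolding value_affine[OF that] value_affine[OF valid] using below_max[of pol'] max_le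
      by linarith
    with valid show "?opt pol"
      by (simp add: optimal_policy_def)
  qed
qed

theorem lemma2:
  shows "\<exists>(S::nat set) (A::nat set) (mu0::nat pmf) (P::kernel) (r1::traj \<Rightarrow> real) (r2::traj \<Rightarrow> real).
    valid_mdp S A mu0 P \<and>
    (\<forall>tau tau'. is_traj S A 2 tau \<longrightarrow> is_traj S A 2 tau' \<longrightarrow>
        sign_link (r1 tau - r1 tau') = sign_link (r2 tau - r2 tau')) \<and>
    (\<exists>pol. optimal_policy S A mu0 P 2 r1 pol) \<and>
    (\<exists>pol. optimal_policy S A mu0 P 2 r2 pol) \<and>
    (\<forall>pol. optimal_policy S A mu0 P 2 r1 pol \<longrightarrow> \<not> optimal_policy S A mu0 P 2 r2 pol) \<and>
    (\<forall>pol. optimal_policy S A mu0 P 2 r2 pol \<longrightarrow> \<not> optimal_policy S A mu0 P 2 r1 pol)"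
proof -
  let ?opt = "optimal_policy {0, 1, 2} {0, 1} (return_pmf 0) coin_kernel 2"
  define r :: "real \<Rightarrow> traj \<Rightarrow> real" where "r c = (\<lambda>t. three_level 0 c 3 (fst (t ! 1)))" for c
  have gamble: "?opt (r 1) pol \<longleftrightarrow> valid_policy {0, 1, 2} {0, 1} pol \<and> pmf (pol [] 0) 1 = 1" for pol
    unfolding r_def optimal_policy_coin_kernel_iff using pmf_le_1[of "pol [] 0" 1]
    by (auto simp: three_level_def)
  have safe: "?opt (r 2) pol \<longleftrightarrow> valid_policy {0, 1, 2} {0, 1} pol \<and> pmf (pol [] 0) 1 = 0" for pol
    unfolding r_def optimal_policy_coin_kernel_iff using pmf_nonneg[of "pol [] 0" 1]
    by (auto simp: three_level_def)
  have "valid_mdp {0, 1, 2} {0, 1} (return_pmf 0) coin_kernel"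
    by (simp add: valid_mdp_def coin_kernel_def)
  moreover have "sign_link (r 1 tau - r 1 tau') = sign_link (r 2 tau - r 2 tau')" for tau tau'
    unfolding r_def by (rule sign_link_three_level_eq) simp_all
  moreover have "?opt (r 1) (\<lambda>_ _. return_pmf 1)" "?opt (r 2) (\<lambda>_ _. return_pmf 0)"
    unfolding gamble safe by (simp_all add: valid_policy_const)
  moreover have "\<not> (?opt (r 1) pol \<and> ?opt (r 2) pol)" for pol
    unfolding gamble safe by simp
  ultimately show ?thesis
    by blast
qed

end
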